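(* Let $k\ge4$ be an integer. Every $k$-ring contains a hole of length $k$.
   Context: Graphs are finite and simple. A hole is an induced cycle on at least four vertices; its length is its number of vertices. For $k\ge4$, a $k$-ring is a graph $R$ whose vertex set can be partitioned into nonempty sets $X_0,\dots,X_{k-1}$ (indices in $\mathbb{Z}_k$) such that for each $i$, $X_i$ can be ordered as $u^i_1,\dots,u^i_{|X_i|}$ so that $X_i\subseteq N_R[u^i_{|X_i|}]\subseteq\dots\subseteq N_R[u^i_1]=X_{i-1}\cup X_i\cup X_{i+1}$, where $N_R[v]$ denotes the closed neighbourhood of $v$. *)

theory Defs
  imports Main
begin

definition simple_graph :: "'a set \<Rightarrow> ('a \<Rightarrow> 'a \<Rightarrow> bool) \<Rightarrow> bool" where
  "simple_graph V E \<longleftrightarrow> finite V \<and> (\<forall>x y. E x y \<longrightarrow> E y x) \<and> (\<forall>x. \<not> E x x)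
     \<and> (\<forall>x y. E x y \<longrightarrow> x \<in> V \<and> y \<in> V)"

definition closed_nbhd :: "'a set \<Rightarrow> ('a \<Rightarrow> 'a \<Rightarrow> bool) \<Rightarrow> 'a \<Rightarrow> 'a set" where
  "closed_nbhd V E v = {w \<in> V. E v w} \<union> {v}"

definition has_hole_of_length :: "'a set \<Rightarrow> ('a \<Rightarrow> 'a \<Rightarrow> bool) \<Rightarrow> nat \<Rightarrow> bool" where
  "has_hole_of_length V E k \<longleftrightarrow> k \<ge> 4 \<and>
     (\<exists>cs. length cs = k \<and> distinct cs \<and> set cs \<subseteq> V \<and>
        (\<forall>i<k. \<forall>j<k. E (cs!i) (cs!j) \<longleftrightarrow> (j = (i+1) mod k \<or> i = (j+1) mod k)))"

text \<open>A k-ring: V partitioned into nonempty X 0, ..., X (k-1) (indices mod k), each X i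
  ordered as a list us (u_1, ..., u_m) with
  X i \<subseteq> N[u_m] \<subseteq> ... \<subseteq> N[u_1] = X(i-1) \<union> X i \<union> X(i+1).\<close>
definition is_ring :: "'a set \<Rightarrow> ('a \<Rightarrow> 'a \<Rightarrow> bool) \<Rightarrow> nat \<Rightarrow> bool" where
  "is_ring V E k \<longleftrightarrow> k \<ge> 4 \<and>
     (\<exists>X :: nat \<Rightarrow> 'a set.
        (\<forall>i<k. X i \<noteq> {}) \<and>
        (\<forall>i<k. \<forall>j<k. i \<noteq> j \<longrightarrow> X i \<inter> X j = {}) \<and>
        (\<Union>i<k. X i) = V \<and>
        (\<forall>i<k. \<exists>us. distinct us \<and> set us = X i \<and>
            X i \<subseteq> closed_nbhd V E (last us) \<and>
            (\<forall>j. j + 1 < length us \<longrightarrow>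
                 closed_nbhd V E (us ! (j+1)) \<subseteq> closed_nbhd V E (us ! j)) \<and>
            closed_nbhd V E (hd us) = X ((i + k - 1) mod k) \<union> X i \<union> X ((i + 1) mod k)))"

end

theory Submission
  imports Defs
begin

text \<open>Pick the first vertex \<open>u\<^sup>i\<^sub>1\<close> of every \<open>X\<^sub>i\<close>. Its closed neighbourhood is exactly
  \<open>X\<^sub>i\<^sub>-\<^sub>1 \<union> X\<^sub>i \<union> X\<^sub>i\<^sub>+\<^sub>1\<close>, and the \<open>X\<^sub>i\<close> are disjoint, so two of these vertices are adjacent
  precisely when their indices are consecutive modulo \<open>k\<close>: they induce a hole of length \<open>k\<close>.\<close>

lemma mod_pred_eq_iff_mod_suc_eq:
  fixes i j k :: nat
  assumes "i < k" "j < k"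
  shows "j = (i + k - 1) mod k \<longleftrightarrow> i = (j + 1) mod k"
proof (cases "i = 0")
  case True
  then show ?thesis using assms by (auto simp: mod_if)
next
  case False
  then have "(i + k - 1) mod k = i - 1"
    using assms by (simp add: mod_if)
  then show ?thesis using False assms by (auto simp: mod_if)
qed

lemma plus_one_mod_neq_self:
  fixes i k :: nat
  assumes "i < k" "2 \<le> k"
  shows "(i + 1) mod k \<noteq> i"
  using assms by (simp add: mod_if)

lemma adjacent_iff_in_closed_nbhd:
  assumes "simple_graph V E"
  shows "E u w \<longleftrightarrow> w \<in> closed_nbhd V E u \<and> w \<noteq> u"
  using assms unfolding simple_graph_def closed_nbhd_def by auto

lemma inj_on_if_in_disjoint:
  assumes "\<And>i. i \<in> I \<Longrightarrow> c i \<in> X i"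
    and "\<And>i j. i \<in> I \<Longrightarrow> j \<in> I \<Longrightarrow> i \<noteq> j \<Longrightarrow> X i \<inter> X j = {}"
  shows "inj_on c I"
proof (rule inj_onI)
  fix i j
  assume "i \<in> I" "j \<in> I" "c i = c j"
  then show "i = j"
    using assms(1)[of i] assms(1)[of j] assms(2)[of i j] by auto
qed

lemma has_hole_of_lengthI:
  fixes k :: nat
  assumes "4 \<le> k" and "inj_on c {..<k}" and "c ` {..<k} \<subseteq> V"
    and "\<And>i j. i < k \<Longrightarrow> j < k \<Longrightarrow>
           E (c i) (c j) \<longleftrightarrow> (j = (i + 1) mod k \<or> i = (j + 1) mod k)"
  shows "has_hole_of_length V E k"
  unfolding has_hole_of_length_def
proof (intro conjI exI)
  show "distinct (map c [0..<k])"
    using assms(2) by (simp add: distinct_map atLeast0LessThan)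
qed (use assms in auto)

lemma is_ring_heads:
  assumes "is_ring V E k"
  obtains c X where "\<And>i. i < k \<Longrightarrow> c i \<in> X i"
    and "\<And>i j. i < k \<Longrightarrow> j < k \<Longrightarrow> i \<noteq> j \<Longrightarrow> X i \<inter> X j = {}"
    and "\<And>i. i < k \<Longrightarrow> X i \<subseteq> V"
    and "\<And>i. i < k \<Longrightarrow>
           closed_nbhd V E (c i) = X ((i + k - 1) mod k) \<union> X i \<union> X ((i + 1) mod k)"
proof -
  obtain X where ne: "\<forall>i<k. X i \<noteq> {}"
    and disj: "\<forall>i<k. \<forall>j<k. i \<noteq> j \<longrightarrow> X i \<inter> X j = {}"
    and cover: "(\<Union>i<k. X i) = V"
    and orders: "\<forall>i<k. \<exists>us. set us = X i \<and>
           closed_nbhd V E (hd us) = X ((i + k - 1) mod k) \<union> X i \<union> X ((i + 1) mod k)"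
    using assms unfolding is_ring_def by metis
  obtain us where us: "\<And>i. i < k \<Longrightarrow> set (us i) = X i \<and>
           closed_nbhd V E (hd (us i)) = X ((i + k - 1) mod k) \<union> X i \<union> X ((i + 1) mod k)"
    using orders by metis
  have "hd (us i) \<in> X i" if "i < k" for i
    using us[OF that] ne that by (metis hd_in_set set_empty)
  then show thesis
    using that[of "\<lambda>i. hd (us i)" X] disj cover us by blast
qed

lemma adjacent_heads_iff_consecutive:
  fixes k :: nat
  assumes "simple_graph V E" and "2 \<le> k"
    and in_X: "\<And>i. i < k \<Longrightarrow> c i \<in> X i"
    and disj: "\<And>i j. i < k \<Longrightarrow> j < k \<Longrightarrow> i \<noteq> j \<Longrightarrow> X i \<inter> X j = {}"
    and nbhd: "\<And>i. i < k \<Longrightarrow>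
           closed_nbhd V E (c i) = X ((i + k - 1) mod k) \<union> X i \<union> X ((i + 1) mod k)"
    and "i < k" "j < k"
  shows "E (c i) (c j) \<longleftrightarrow> (j = (i + 1) mod k \<or> i = (j + 1) mod k)"
proof -
  have head_in_X: "c j \<in> X m \<longleftrightarrow> j = m" if "m < k" for m
    using in_X[OF \<open>j < k\<close>] disj[OF \<open>j < k\<close> that] by blast
  have "c j \<noteq> c i \<longleftrightarrow> j \<noteq> i"
    using head_in_X[OF \<open>i < k\<close>] in_X[OF \<open>i < k\<close>] by auto
  then have "E (c i) (c j) \<longleftrightarrow> c j \<in> closed_nbhd V E (c i) \<and> j \<noteq> i"
    using adjacent_iff_in_closed_nbhd[OF assms(1)] by blast
  moreover have "c j \<in> closed_nbhd V E (c i) \<longleftrightarrow>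
      j = (i + k - 1) mod k \<or> j = i \<or> j = (i + 1) mod k"
    using nbhd[OF \<open>i < k\<close>] head_in_X[of "(i + k - 1) mod k"] head_in_X[of "(i + 1) mod k"]
      head_in_X[of i] \<open>i < k\<close> by auto
  ultimately have "E (c i) (c j) \<longleftrightarrow>
      (j = (i + k - 1) mod k \<or> j = i \<or> j = (i + 1) mod k) \<and> j \<noteq> i"
    by blast
  then show ?thesis
    using mod_pred_eq_iff_mod_suc_eq[OF \<open>i < k\<close> \<open>j < k\<close>]
      plus_one_mod_neq_self[OF \<open>i < k\<close> \<open>2 \<le> k\<close>] plus_one_mod_neq_self[OF \<open>j < k\<close> \<open>2 \<le> k\<close>]
    by auto
qed

theorem proposition6p4:
  fixes V :: "'a set" and E :: "'a \<Rightarrow> 'a \<Rightarrow> bool" and k :: nat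
  assumes "k \<ge> 4"
    and "simple_graph V E"
    and "is_ring V E k"
  shows "has_hole_of_length V E k"
proof -
  obtain c X where in_X: "\<And>i. i < k \<Longrightarrow> c i \<in> X i"
    and disj: "\<And>i j. i < k \<Longrightarrow> j < k \<Longrightarrow> i \<noteq> j \<Longrightarrow> X i \<inter> X j = {}"
    and in_V: "\<And>i. i < k \<Longrightarrow> X i \<subseteq> V"
    and nbhd: "\<And>i. i < k \<Longrightarrow>
           closed_nbhd V E (c i) = X ((i + k - 1) mod k) \<union> X i \<union> X ((i + 1) mod k)"
    using is_ring_heads[OF assms(3)] by metis
  have "inj_on c {..<k}"
    by (rule inj_on_if_in_disjoint[of _ c X]) (simp_all add: in_X disj)
  moreover have "c ` {..<k} \<subseteq> V"
    using in_X in_V by blast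
  moreover have "E (c i) (c j) \<longleftrightarrow> (j = (i + 1) mod k \<or> i = (j + 1) mod k)"
    if "i < k" "j < k" for i j
    using adjacent_heads_iff_consecutive[OF assms(2) _ in_X disj nbhd that] assms(1) by simp
  ultimately show ?thesis
    using has_hole_of_lengthI[OF assms(1)] by blast
qed

end
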